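(* Let $b(\lambda)=\frac14\lambda^4+\frac12p\lambda^2+q\lambda$ with $p<0$, $q\in\mathbb{R}$, let $b^*(\eta)=\sup_{\lambda}[\eta\lambda-b(\lambda)]$, and $A(x,r,\eta)=b(x)+b(r)-\eta(x+r)+2b^*(\eta)$. (1) If $x=\sqrt{-p}$, then for $\eta>q$, $A(x,x,\eta)\approx(\eta-q)^2(1+|\eta|)^{-2/3}$. (2) If $x=-\sqrt{-p}$, then for $\eta<q$, $A(x,x,\eta)\approx(\eta-q)^2(1+|\eta|)^{-2/3}$.
   Context: $X\approx Y$ means $cY\le X\le c^{-1}Y$ for some $c>0$ independent of $\eta$ (it may depend on $p,q$). *)

theory Defs
  imports Complex_Main
begin

definition bfun :: "real \<Rightarrow> real \<Rightarrow> real \<Rightarrow> real" where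
  "bfun p q l = l^4 / 4 + p * l^2 / 2 + q * l"

definition bstar :: "real \<Rightarrow> real \<Rightarrow> real \<Rightarrow> real" where
  "bstar p q \<eta> = (SUP l::real. \<eta> * l - bfun p q l)"

definition Afun :: "real \<Rightarrow> real \<Rightarrow> real \<Rightarrow> real \<Rightarrow> real \<Rightarrow> real" where
  "Afun p q x r \<eta> = bfun p q x + bfun p q r - \<eta> * (x + r) + 2 * bstar p q \<eta>"

end

theory Submission
  imports Defs
begin

text \<open>
With \<open>a = sqrt (-p)\<close> and \<open>\<nu> = \<eta> - q\<close> one has
\<open>\<eta> \<lambda> - b \<lambda> = \<nu> (\<lambda> - a) - (\<lambda>\<^sup>2 - a\<^sup>2)\<^sup>2 / 4 + (\<eta> a - b a)\<close>, so
\<open>A(a, a, \<eta>)\<close> is twice the supremum of the tilted double well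
\<open>\<nu> s - s\<^sup>2 (s + 2a)\<^sup>2 / 4\<close>, \<open>s = \<lambda> - a\<close>. For small \<open>\<nu>\<close> the term \<open>a\<^sup>2 s\<^sup>2\<close>
dominates and the supremum is of order \<open>\<nu>\<^sup>2\<close>; for large \<open>\<nu>\<close> the term \<open>s\<^sup>4 / 4\<close>
dominates and it is of order \<open>\<nu>\<^bsup>4/3\<^esup>\<close>. Both regimes are captured by
\<open>\<nu>\<^sup>2 (1 + \<nu>)\<^bsup>-2/3\<^esup>\<close>, and \<open>1 + |\<eta> - q|\<close> is comparable to \<open>1 + |\<eta>|\<close> up to
the factor \<open>1 + |q|\<close>. The well at \<open>-sqrt (-p)\<close> reduces to the one at \<open>sqrt (-p)\<close>
by the symmetry \<open>\<lambda> \<mapsto> -\<lambda>\<close>, which turns \<open>b\<close> with parameter \<open>q\<close> into \<open>b\<close> with \<open>-q\<close>.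
\<close>

definition tilted_well :: "real \<Rightarrow> real \<Rightarrow> real \<Rightarrow> real" where
  "tilted_well a \<nu> t = \<nu> * (t - a) - (t^2 - a^2)^2 / 4"

lemma tilted_well_shift:
  "tilted_well a \<nu> (a + s) = \<nu> * s - s^2 * (s + 2*a)^2 / 4"
  unfolding tilted_well_def by (simp add: power2_eq_square algebra_simps)

lemma tilted_well_pos_bounds:
  fixes a \<nu> t :: real
  assumes "a > 0" "\<nu> > 0" "tilted_well a \<nu> t > 0"
  shows "0 < t - a" "a^2 * (t - a) + (t - a)^3 / 4 < \<nu>" "tilted_well a \<nu> t \<le> \<nu> * (t - a)"
proof -
  define s where "s = t - a"
  have G: "tilted_well a \<nu> t = \<nu> * s - s^2 * (s + 2*a)^2 / 4"
    using tilted_well_shift[of a \<nu> s] by (simp add: s_def)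
  then show "tilted_well a \<nu> t \<le> \<nu> * (t - a)"
    by (simp add: s_def)
  show s_pos: "0 < t - a"
  proof (rule ccontr)
    assume "\<not> 0 < t - a"
    then have "\<nu> * s \<le> 0" using \<open>\<nu> > 0\<close> by (simp add: s_def mult_nonneg_nonpos)
    moreover have "0 \<le> s^2 * (s + 2*a)^2 / 4" by simp
    ultimately show False using G \<open>tilted_well a \<nu> t > 0\<close> by linarith
  qed
  have "0 < s" using s_pos by (simp add: s_def)
  then have "s^2 + 4*a^2 \<le> (s + 2*a)^2"
    using \<open>a > 0\<close> by (simp add: power2_eq_square algebra_simps)
  then have "s^2 * (s^2 + 4*a^2) \<le> s^2 * (s + 2*a)^2"
    by (simp add: mult_left_mono)
  then have "s * (a^2 * s + s^3 / 4) \<le> s^2 * (s + 2*a)^2 / 4"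
    by (simp add: power2_eq_square power3_eq_cube algebra_simps)
  then have "s * (a^2 * s + s^3 / 4) < s * \<nu>"
    using G \<open>tilted_well a \<nu> t > 0\<close> by (simp add: algebra_simps)
  then show "a^2 * (t - a) + (t - a)^3 / 4 < \<nu>"
    using s_pos by (simp add: s_def)
qed

lemma tilted_well_le:
  fixes a \<nu> W t :: real
  assumes a: "a > 0" and \<nu>: "\<nu> > 0" and W: "W \<ge> 1" "W^3 = 1 + \<nu>"
  shows "tilted_well a \<nu> t \<le> (2 / a^2 + 4) * \<nu>^2 / W^2"
proof (cases "tilted_well a \<nu> t > 0")
  case False
  moreover have "0 \<le> (2 / a^2 + 4) * \<nu>^2 / W^2" by simp
  ultimately show ?thesis by linarith
next
  case True
  define s where "s = t - a"
  have s: "0 < s" "a^2 * s + s^3 / 4 < \<nu>" "tilted_well a \<nu> t \<le> \<nu> * s"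
    using tilted_well_pos_bounds[OF a \<nu> True] by (simp_all add: s_def)
  have W2: "W^2 > 0" using W by simp
  have "s \<le> (2 / a^2 + 4) * \<nu> / W^2"
  proof (cases "\<nu> \<le> 1")
    case True
    have "W^2 \<le> 2"
      using W True power_increasing[of 2 3 W] by simp
    have "a^2 * s < \<nu>"
      using s zero_less_power[OF \<open>0 < s\<close>, of 3] by linarith
    then have "s < \<nu> / a^2"
      using a by (simp add: field_simps mult.commute)
    also have "\<dots> \<le> 2 * \<nu> / (a^2 * W^2)"
      using \<open>W^2 \<le> 2\<close> W2 a \<nu> by (simp add: field_simps)
    also have "\<dots> \<le> (2 / a^2 + 4) * \<nu> / W^2"
      using W2 a \<nu> by (simp add: field_simps)
    finally show ?thesis by simp
  next
    case False
    have "a^2 * s > 0"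
      using s a by simp
    then have "s^3 < 4 * \<nu>"
      using s by linarith
    have "s < 2 * W"
    proof (rule ccontr)
      assume "\<not> s < 2 * W"
      then have "(2*W)^3 \<le> s^3" using W by (intro power_mono) auto
      then show False using \<open>s^3 < 4 * \<nu>\<close> W \<nu> by simp
    qed
    also have "2 * W = 2 * W^3 / W^2" using W2 by (simp add: power2_eq_square power3_eq_cube field_simps)
    also have "\<dots> \<le> 4 * \<nu> / W^2" using W False W2 by (simp add: divide_right_mono)
    also have "\<dots> \<le> (2 / a^2 + 4) * \<nu> / W^2" using W2 a \<nu> by (simp add: divide_right_mono)
    finally show ?thesis by simp
  qed
  then have "\<nu> * s \<le> \<nu> * ((2 / a^2 + 4) * \<nu> / W^2)"
    using \<nu> by (intro mult_left_mono) auto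
  also have "\<dots> = (2 / a^2 + 4) * \<nu>^2 / W^2"
    by (simp add: power2_eq_square)
  finally show ?thesis
    using s by linarith
qed

lemma tilted_well_ge:
  fixes a \<nu> W :: real
  assumes a: "a > 0" and \<nu>: "\<nu> > 0" and W: "W \<ge> 1" "\<nu> \<le> W^3"
  shows "\<nu>^2 / (2 * (1 + 2*a)^2 * W^2) \<le> tilted_well a \<nu> (a + \<nu> / ((1 + 2*a)^2 * W^2))"
proof -
  define D where "D = (1 + 2*a)^2"
  define s where "s = \<nu> / (D * W^2)"
  have D: "D \<ge> 1" using a by (simp add: D_def)
  have W2: "W^2 > 0" using W by simp
  have s_pos: "s > 0" using \<nu> D W2 by (simp add: s_def)
  have "s \<le> W^3 / (D * W^2)"
    using W D W2 by (simp add: s_def divide_right_mono)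
  also have "\<dots> \<le> W"
    using D W2 W by (simp add: power2_eq_square power3_eq_cube field_simps)
  finally have "s \<le> W" .
  moreover have "2*a \<le> 2*a * W"
    using W a by simp
  ultimately have "s + 2*a \<le> (1 + 2*a) * W"
    by (simp add: algebra_simps)
  then have "(s + 2*a)^2 \<le> ((1 + 2*a) * W)^2"
    using s_pos a by (intro power_mono) auto
  then have "(s + 2*a)^2 \<le> D * W^2"
    by (simp add: D_def power_mult_distrib)
  then have "s^2 * (s + 2*a)^2 / 4 \<le> s^2 * (D * W^2) / 4"
    by (simp add: mult_left_mono)
  also have "\<dots> = \<nu> * s / 4"
    using D W2 by (simp add: s_def power2_eq_square field_simps)
  finally have "\<nu> * s / 2 \<le> \<nu> * s - s^2 * (s + 2*a)^2 / 4"
    using mult_pos_pos[OF \<nu> s_pos] by linarith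
  moreover have "\<nu> * s / 2 = \<nu>^2 / (2 * D * W^2)"
    by (simp add: s_def power2_eq_square)
  ultimately have "\<nu>^2 / (2 * D * W^2) \<le> \<nu> * s - s^2 * (s + 2*a)^2 / 4"
    by simp
  then show ?thesis
    by (simp add: tilted_well_shift D_def s_def)
qed

lemma powr_one_third_cube:
  fixes x :: real
  assumes "x > 0"
  shows "(x powr (1/3))^3 = x" "x powr (-2/3) = inverse ((x powr (1/3))^2)"
  using assms by (simp_all add: powr_realpow[symmetric] powr_powr powr_minus)

lemma SUP_tilted_well_comparable:
  fixes a :: real
  assumes a: "a > 0"
  shows "\<exists>c>0. \<forall>\<nu>>0. c * (\<nu>^2 * (1 + \<nu>) powr (-2/3)) \<le> (SUP t. tilted_well a \<nu> t) \<and>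
                      (SUP t. tilted_well a \<nu> t) \<le> inverse c * (\<nu>^2 * (1 + \<nu>) powr (-2/3))"
proof (intro exI conjI allI impI)
  define C where "C = max (2 * (1 + 2*a)^2) (2 / a^2 + 4)"
  have "0 < 2 / a^2 + 4" using a by (simp add: add_pos_pos)
  then show "inverse C > 0" by (simp add: C_def less_max_iff_disj)
  fix \<nu> :: real
  assume \<nu>: "\<nu> > 0"
  define W where "W = (1 + \<nu>) powr (1/3)"
  have W: "W \<ge> 1" "W^3 = 1 + \<nu>" "(1 + \<nu>) powr (-2/3) = inverse (W^2)"
    using \<nu> powr_one_third_cube[of "1 + \<nu>"] by (simp_all add: W_def ge_one_powr_ge_zero)
  have upper: "tilted_well a \<nu> t \<le> C * (\<nu>^2 * inverse (W^2))" for t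
  proof -
    have "tilted_well a \<nu> t \<le> (2 / a^2 + 4) * \<nu>^2 / W^2"
      using tilted_well_le[OF a \<nu> W(1,2)] .
    also have "\<dots> = (2 / a^2 + 4) * (\<nu>^2 * inverse (W^2))"
      by (simp add: divide_inverse)
    also have "\<dots> \<le> C * (\<nu>^2 * inverse (W^2))"
      unfolding C_def by (intro mult_right_mono) auto
    finally show ?thesis .
  qed
  have "inverse C \<le> inverse (2 * (1 + 2*a)^2)"
    using a by (intro le_imp_inverse_le) (auto simp: C_def)
  then have "inverse C * (\<nu>^2 * inverse (W^2)) \<le> inverse (2 * (1 + 2*a)^2) * (\<nu>^2 * inverse (W^2))"
    by (intro mult_right_mono) auto
  also have "\<dots> = \<nu>^2 / (2 * (1 + 2*a)^2 * W^2)"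
    by (simp add: field_simps)
  also have "\<dots> \<le> tilted_well a \<nu> (a + \<nu> / ((1 + 2*a)^2 * W^2))"
    using tilted_well_ge[OF a \<nu> W(1)] W(2) by simp
  also have "\<dots> \<le> (SUP t. tilted_well a \<nu> t)"
    using upper by (intro cSUP_upper bdd_aboveI2) auto
  finally show "inverse C * (\<nu>^2 * (1 + \<nu>) powr (-2/3)) \<le> (SUP t. tilted_well a \<nu> t)"
    using W(3) by simp
  show "(SUP t. tilted_well a \<nu> t) \<le> inverse (inverse C) * (\<nu>^2 * (1 + \<nu>) powr (-2/3))"
    using upper W(3) by (simp add: cSUP_least)
qed

lemma legendre_tilted_well:
  fixes a p q \<eta> l :: real
  assumes "a^2 = -p"
  shows "\<eta> * l - bfun p q l = tilted_well a (\<eta> - q) l + (\<eta> * a - bfun p q a)"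
proof -
  have p: "p = - (a^2)" using assms by simp
  show ?thesis
    unfolding bfun_def tilted_well_def p by (simp add: field_simps power2_eq_square power4_eq_xxxx)
qed

lemma cSUP_add_const:
  fixes f :: "'a \<Rightarrow> real"
  assumes "bdd_above (range f)"
  shows "(SUP x. f x + k) = (SUP x. f x) + k"
proof (rule antisym)
  show "(SUP x. f x + k) \<le> (SUP x. f x) + k"
    using assms by (intro cSUP_least) (auto intro: cSUP_upper)
  have "bdd_above (range (\<lambda>x. f x + k))"
    using assms by (auto simp: bdd_above_def intro: add_right_mono)
  then have "(SUP x. f x) \<le> (SUP x. f x + k) - k"
    by (intro cSUP_least) (auto simp: le_diff_eq intro: cSUP_upper)
  then show "(SUP x. f x) + k \<le> (SUP x. f x + k)"
    by simp
qed

lemma bdd_above_tilted_well: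
  fixes a \<nu> :: real
  assumes "a > 0" "\<nu> > 0"
  shows "bdd_above (range (tilted_well a \<nu>))"
proof -
  define W where "W = (1 + \<nu>) powr (1/3)"
  have "W \<ge> 1" "W^3 = 1 + \<nu>"
    using assms powr_one_third_cube[of "1 + \<nu>"] by (simp_all add: W_def ge_one_powr_ge_zero)
  then show ?thesis
    using tilted_well_le[OF assms] by (intro bdd_aboveI2) blast
qed

lemma Afun_well_eq_SUP_tilted_well:
  fixes a p q \<eta> :: real
  assumes "a > 0" "a^2 = -p" "q < \<eta>"
  shows "Afun p q a a \<eta> = 2 * (SUP t. tilted_well a (\<eta> - q) t)"
proof -
  have "bstar p q \<eta> = (SUP l. tilted_well a (\<eta> - q) l + (\<eta> * a - bfun p q a))"
    unfolding bstar_def by (rule SUP_cong[OF refl legendre_tilted_well[OF assms(2)]])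
  also have "\<dots> = (SUP t. tilted_well a (\<eta> - q) t) + (\<eta> * a - bfun p q a)"
    using assms by (intro cSUP_add_const bdd_above_tilted_well) auto
  finally have "bstar p q \<eta> = (SUP t. tilted_well a (\<eta> - q) t) + (\<eta> * a - bfun p q a)" .
  then show ?thesis
    unfolding Afun_def by (simp add: algebra_simps)
qed

lemma SUP_uminus_reindex:
  fixes f :: "'a::ab_group_add \<Rightarrow> 'b::Sup"
  shows "(SUP x. f (- x)) = (SUP x. f x)"
  by (simp only: image_image[of f uminus UNIV, symmetric] surj_uminus)

lemma bstar_uminus: "bstar p q (- \<eta>) = bstar p (- q) \<eta>"
proof -
  have "bstar p q (- \<eta>) = (SUP l. (\<lambda>m. \<eta> * m - bfun p (- q) m) (- l))"
    unfolding bstar_def bfun_def by simp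
  also have "\<dots> = bstar p (- q) \<eta>"
    unfolding bstar_def by (rule SUP_uminus_reindex)
  finally show ?thesis .
qed

lemma Afun_uminus: "Afun p q (- x) (- r) \<eta> = Afun p (- q) x r (- \<eta>)"
  using bstar_uminus[of p "- q" \<eta>] unfolding Afun_def bfun_def by (simp add: algebra_simps)

lemma powr_one_plus_abs_add_ge:
  fixes x y e :: real
  assumes "e \<le> 0"
  shows "(1 + \<bar>x\<bar>) powr e * (1 + \<bar>y\<bar>) powr e \<le> (1 + \<bar>x + y\<bar>) powr e"
proof -
  have "(1 + \<bar>x\<bar>) * (1 + \<bar>y\<bar>) = 1 + \<bar>x\<bar> + \<bar>y\<bar> + \<bar>x\<bar> * \<bar>y\<bar>"
    by (simp add: algebra_simps)
  then have "1 + \<bar>x + y\<bar> \<le> (1 + \<bar>x\<bar>) * (1 + \<bar>y\<bar>)"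
    using abs_triangle_ineq[of x y] zero_le_mult_iff[of "\<bar>x\<bar>" "\<bar>y\<bar>"] by linarith
  then have "((1 + \<bar>x\<bar>) * (1 + \<bar>y\<bar>)) powr e \<le> (1 + \<bar>x + y\<bar>) powr e"
    using assms by (intro powr_mono2') auto
  then show ?thesis
    by (simp add: powr_mult)
qed

lemma comparable_weight_shift:
  fixes f g :: "real \<Rightarrow> real" and c e q :: real
  assumes "e \<le> 0" "c > 0"
    and f: "\<And>\<eta>. P \<eta> \<Longrightarrow> 0 \<le> f \<eta>"
    and g: "\<And>\<eta>. P \<eta> \<Longrightarrow> c * (f \<eta> * (1 + \<bar>\<eta> - q\<bar>) powr e) \<le> g \<eta> \<and>
                                g \<eta> \<le> inverse c * (f \<eta> * (1 + \<bar>\<eta> - q\<bar>) powr e)"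
  shows "\<exists>c>0. \<forall>\<eta>. P \<eta> \<longrightarrow> c * (f \<eta> * (1 + \<bar>\<eta>\<bar>) powr e) \<le> g \<eta> \<and>
                               g \<eta> \<le> inverse c * (f \<eta> * (1 + \<bar>\<eta>\<bar>) powr e)"
proof (intro exI[of _ "c * (1 + \<bar>q\<bar>) powr e"] conjI allI impI)
  define \<kappa> where "\<kappa> = (1 + \<bar>q\<bar>) powr e"
  have \<kappa>: "\<kappa> > 0" by (simp add: \<kappa>_def)
  show "c * (1 + \<bar>q\<bar>) powr e > 0" using \<open>c > 0\<close> by simp
  fix \<eta> :: real
  assume "P \<eta>"
  define V where "V = (1 + \<bar>\<eta> - q\<bar>) powr e"
  define W where "W = (1 + \<bar>\<eta>\<bar>) powr e"
  have "\<kappa> * V \<le> W"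
    using powr_one_plus_abs_add_ge[OF \<open>e \<le> 0\<close>, of q "\<eta> - q"] by (simp add: \<kappa>_def V_def W_def)
  have "\<kappa> * W \<le> V"
    using powr_one_plus_abs_add_ge[OF \<open>e \<le> 0\<close>, of "- q" \<eta>] by (simp add: \<kappa>_def V_def W_def)
  have "c * \<kappa> * (f \<eta> * W) = c * f \<eta> * (\<kappa> * W)"
    by (simp add: algebra_simps)
  also have "\<dots> \<le> c * f \<eta> * V"
    using \<open>\<kappa> * W \<le> V\<close> \<open>c > 0\<close> f[OF \<open>P \<eta>\<close>] by (intro mult_left_mono) auto
  also have "\<dots> \<le> g \<eta>"
    using g[OF \<open>P \<eta>\<close>] by (simp add: V_def mult.assoc)
  finally show "c * (1 + \<bar>q\<bar>) powr e * (f \<eta> * (1 + \<bar>\<eta>\<bar>) powr e) \<le> g \<eta>"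
    by (simp add: \<kappa>_def W_def)
  have "g \<eta> \<le> inverse c * f \<eta> * V"
    using g[OF \<open>P \<eta>\<close>] by (simp add: V_def mult.assoc)
  also have "\<dots> \<le> inverse c * f \<eta> * (W / \<kappa>)"
    using \<open>\<kappa> * V \<le> W\<close> \<kappa> \<open>c > 0\<close> f[OF \<open>P \<eta>\<close>] by (intro mult_left_mono) (auto simp: field_simps)
  also have "\<dots> = inverse (c * \<kappa>) * (f \<eta> * W)"
    using \<kappa> by (simp add: field_simps)
  finally show "g \<eta> \<le> inverse (c * (1 + \<bar>q\<bar>) powr e) * (f \<eta> * (1 + \<bar>\<eta>\<bar>) powr e)"
    by (simp add: \<kappa>_def W_def)
qed

lemma Afun_well_comparable_centred:
  fixes p q :: real
  assumes "p < 0"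
  shows "\<exists>c>0. \<forall>\<eta>. \<eta> > q \<longrightarrow>
            c * ((\<eta> - q)^2 * (1 + \<bar>\<eta> - q\<bar>) powr (-2/3)) \<le> Afun p q (sqrt (-p)) (sqrt (-p)) \<eta> \<and>
            Afun p q (sqrt (-p)) (sqrt (-p)) \<eta> \<le> inverse c * ((\<eta> - q)^2 * (1 + \<bar>\<eta> - q\<bar>) powr (-2/3))"
proof -
  define a where "a = sqrt (-p)"
  have a: "a > 0" "a^2 = -p" using assms by (simp_all add: a_def)
  obtain c where c: "c > 0" and bounds: "\<And>\<nu>. \<nu> > 0 \<Longrightarrow>
      c * (\<nu>^2 * (1 + \<nu>) powr (-2/3)) \<le> (SUP t. tilted_well a \<nu> t) \<and>
      (SUP t. tilted_well a \<nu> t) \<le> inverse c * (\<nu>^2 * (1 + \<nu>) powr (-2/3))"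
    using SUP_tilted_well_comparable[OF a(1)] by blast
  show ?thesis
  proof (intro exI[of _ "c / 2"] conjI allI impI)
    show "c / 2 > 0" using c by simp
    fix \<eta> :: real
    assume "\<eta> > q"
    define X where "X = (\<eta> - q)^2 * (1 + \<bar>\<eta> - q\<bar>) powr (-2/3)"
    define S where "S = (SUP t. tilted_well a (\<eta> - q) t)"
    have "\<bar>\<eta> - q\<bar> = \<eta> - q" using \<open>\<eta> > q\<close> by simp
    then have "c * X \<le> S" "S \<le> inverse c * X"
      using bounds[of "\<eta> - q"] \<open>\<eta> > q\<close> by (simp_all add: X_def S_def)
    moreover have "0 \<le> c * X"
      using c by (simp add: X_def)
    moreover have "Afun p q (sqrt (-p)) (sqrt (-p)) \<eta> = 2 * S"
      using Afun_well_eq_SUP_tilted_well[OF a \<open>\<eta> > q\<close>] by (simp add: a_def S_def)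
    moreover have "c / 2 * X = c * X / 2" "inverse (c / 2) * X = 2 * (inverse c * X)"
      using c by (simp_all add: field_simps)
    ultimately show "c / 2 * ((\<eta> - q)^2 * (1 + \<bar>\<eta> - q\<bar>) powr (-2/3)) \<le> Afun p q (sqrt (-p)) (sqrt (-p)) \<eta>"
      and "Afun p q (sqrt (-p)) (sqrt (-p)) \<eta> \<le> inverse (c / 2) * ((\<eta> - q)^2 * (1 + \<bar>\<eta> - q\<bar>) powr (-2/3))"
      unfolding X_def[symmetric] by linarith+
  qed
qed

lemma Afun_well_comparable:
  fixes p q :: real
  assumes "p < 0"
  shows "\<exists>c>0. \<forall>\<eta>. \<eta> > q \<longrightarrow>
            c * ((\<eta> - q)^2 * (1 + \<bar>\<eta>\<bar>) powr (-2/3)) \<le> Afun p q (sqrt (-p)) (sqrt (-p)) \<eta> \<and>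
            Afun p q (sqrt (-p)) (sqrt (-p)) \<eta> \<le> inverse c * ((\<eta> - q)^2 * (1 + \<bar>\<eta>\<bar>) powr (-2/3))"
proof -
  obtain c where "c > 0" and c: "\<forall>\<eta>. \<eta> > q \<longrightarrow>
      c * ((\<eta> - q)^2 * (1 + \<bar>\<eta> - q\<bar>) powr (-2/3)) \<le> Afun p q (sqrt (-p)) (sqrt (-p)) \<eta> \<and>
      Afun p q (sqrt (-p)) (sqrt (-p)) \<eta> \<le> inverse c * ((\<eta> - q)^2 * (1 + \<bar>\<eta> - q\<bar>) powr (-2/3))"
    using Afun_well_comparable_centred[OF assms] by blast
  show ?thesis
  proof (rule comparable_weight_shift[where q = q and c = c])
    show "- 2 / 3 \<le> (0::real)" "c > 0" "\<And>\<eta>. q < \<eta> \<Longrightarrow> 0 \<le> (\<eta> - q)^2"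
      using \<open>c > 0\<close> by simp_all
  qed (use c in blast)
qed

theorem proposition6p3:
  fixes p q :: real
  assumes "p < 0"
  shows "(\<exists>c>0. \<forall>\<eta>. \<eta> > q \<longrightarrow>
            c * ((\<eta> - q)^2 * (1 + \<bar>\<eta>\<bar>) powr (-2/3)) \<le> Afun p q (sqrt (-p)) (sqrt (-p)) \<eta> \<and>
            Afun p q (sqrt (-p)) (sqrt (-p)) \<eta> \<le> inverse c * ((\<eta> - q)^2 * (1 + \<bar>\<eta>\<bar>) powr (-2/3)))
       \<and> (\<exists>c>0. \<forall>\<eta>. \<eta> < q \<longrightarrow>
            c * ((\<eta> - q)^2 * (1 + \<bar>\<eta>\<bar>) powr (-2/3)) \<le> Afun p q (- sqrt (-p)) (- sqrt (-p)) \<eta> \<and>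
            Afun p q (- sqrt (-p)) (- sqrt (-p)) \<eta> \<le> inverse c * ((\<eta> - q)^2 * (1 + \<bar>\<eta>\<bar>) powr (-2/3)))"
proof -
  obtain c where "c > 0" and c: "\<forall>\<eta>. \<eta> > - q \<longrightarrow>
      c * ((\<eta> + q)^2 * (1 + \<bar>\<eta>\<bar>) powr (-2/3)) \<le> Afun p (- q) (sqrt (-p)) (sqrt (-p)) \<eta> \<and>
      Afun p (- q) (sqrt (-p)) (sqrt (-p)) \<eta> \<le> inverse c * ((\<eta> + q)^2 * (1 + \<bar>\<eta>\<bar>) powr (-2/3))"
    using Afun_well_comparable[OF assms, of "- q"] by auto
  show ?thesis
    apply (intro conjI[OF Afun_well_comparable[OF assms]] exI[of _ c] conjI[OF \<open>c > 0\<close>] allI impI)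
    subgoal for \<eta>
      using c[rule_format, of "- \<eta>"] by (simp add: Afun_uminus power2_commute)
    done
qed

end
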